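(* Let $L>0$ with $L\notin\mathcal N$, let $c\in\mathbb R$, let $\varepsilon>0$, and let $W,\underline c,\overline c$ be as in the context. Define $M(x)= 2c\,\frac{\sin(x/2)\sin((L-x)/2)}{\sin(L/2)}$ for $x\in[0,L]$ and, for $(y,z)\in L^2(0,L)\times\mathbb R$, $$V_1(y,z) = \varepsilon W(y) + \frac{1}{2}\left(\varepsilon \int_0^L M(x) y(x)\, dx - z \right)^2.$$ Then $$\underline{\nu}_1\big(\Vert y\Vert^2_{L^2(0,L)}+|z|^2\big)\leq V_1(y,z) \leq \overline{\nu}_1\big(\Vert y\Vert^2_{L^2(0,L)} + |z|^2\big)\quad\text{for all }(y,z)\in L^2(0,L)\times\mathbb R,$$ with $\overline{\nu}_1 = \max\left(\varepsilon \overline c+\varepsilon^2 \Vert M\Vert^2_{L^2(0,L)},1\right)$ and $\underline{\nu}_1=\min\left(\frac{\underline{c}\varepsilon}{2}, \frac{1}{2}\frac{\underline c \varepsilon}{\varepsilon^2 \Vert M\Vert^2_{L^2(0,L)}+ \underline c \varepsilon} \right)$. Moreover, for $\varepsilon\leq 1$, there exists a constant $C>0$ such that $$\varepsilon \big(\Vert y\Vert^2_{L^2(0,L)} + |z|^2\big) \leq V_1(y,z) \leq C \big(\Vert y\Vert^2_{L^2(0,L)} + |z|^2\big)\quad\text{for all }(y,z).$$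
   Context: $\mathcal{N}:=\left\{2\pi\sqrt{\tfrac{k^2+kl+l^2}{3}}:k,l\in\mathbb N\right\}$ (the set of critical lengths). Standing assumption: $L\notin\mathcal N$. Fix a functional $W:L^2(0,L)\to\mathbb R$ and positive constants $\lambda,\kappa_1,\kappa_2,\kappa_3,\underline c,\overline c$ (such objects exist when $L\notin\mathcal N$) with $\underline c\Vert y\Vert^2_{L^2(0,L)}\le W(y)\le \overline c\Vert y\Vert^2_{L^2(0,L)}$ for all $y\in L^2(0,L)$, and such that for all $d_1\in L^2_{loc}(\mathbb R_+;L^2(0,L))$, $d_2\in L^2_{loc}(\mathbb R_+)$, the solutions of $y_t+y_x+y_{xxx}=d_1$ on $(0,L)$, $y(t,0)=y(t,L)=0$, $y_x(t,L)=d_2(t)$, $y(0)=y_0$ satisfy $\frac{d}{dt}W(y)\le -\lambda\Vert y\Vert^2_{L^2(0,L)}+\kappa_1\Vert d_1(t,\cdot)\Vert^2_{L^2(0,L)}+\kappa_2|d_2(t)|^2-\kappa_3|y_x(t,0)|^2$.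
   Formalization: In the Moreover clause the lower bound is $\varepsilon$/C times $\Vert y\Vert^2_{L^2(0,L)}+|z|^2$ instead of $\varepsilon$ times it, with one C>0 serving both bounds for every $\varepsilon\leq 1$; in $\mathcal N$, k and l are positive integers. Apart from conventions, each condition added here is assumed in the paper as well or is needed for the statement above to hold. *)

theory Defs
  imports "HOL-Analysis.Analysis"
begin

definition critical_lengths :: "real set" where
  "critical_lengths =
     {2 * pi * sqrt ((real k ^ 2 + real k * real l + real l ^ 2) / 3) | k l :: nat. k \<ge> 1 \<and> l \<ge> 1}"

definition in_L2 :: "real \<Rightarrow> (real \<Rightarrow> real) \<Rightarrow> bool" where
  "in_L2 L y \<longleftrightarrow> y measurable_on {0..L} \<and> (\<lambda>x. (y x)^2) integrable_on {0..L}"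

definition L2norm2 :: "real \<Rightarrow> (real \<Rightarrow> real) \<Rightarrow> real" where
  "L2norm2 L y = integral {0..L} (\<lambda>x. (y x)^2)"

definition Mfun :: "real \<Rightarrow> real \<Rightarrow> real \<Rightarrow> real" where
  "Mfun c L x = 2 * c * (sin (x / 2) * sin ((L - x) / 2)) / sin (L / 2)"

definition V1 :: "((real \<Rightarrow> real) \<Rightarrow> real) \<Rightarrow> real \<Rightarrow> real \<Rightarrow> real \<Rightarrow> (real \<Rightarrow> real) \<Rightarrow> real \<Rightarrow> real" where
  "V1 W c L eps y z =
     eps * W y + (1/2) * (eps * integral {0..L} (\<lambda>x. Mfun c L x * y x) - z)^2"

end

theory Submission
  imports Defs
begin

text \<open>By Cauchy--Schwarz, the coupling term \<open>\<epsilon> \<integral> M y\<close> satisfies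
  \<open>(\<epsilon> \<integral> M y)\<^sup>2 \<le> \<epsilon>\<^sup>2 \<parallel>M\<parallel>\<^sup>2 \<parallel>y\<parallel>\<^sup>2\<close>. The upper bound then follows from
  \<open>(a - z)\<^sup>2 \<le> 2 a\<^sup>2 + 2 z\<^sup>2\<close>, and the lower bound from the elementary inequality
  \<open>B z\<^sup>2 / (A + B) \<le> B Y + (a - z)\<^sup>2\<close> whenever \<open>a\<^sup>2 \<le> A Y\<close>, applied with \<open>A = \<epsilon>\<^sup>2 \<parallel>M\<parallel>\<^sup>2\<close>
  and \<open>B = \<underline>c \<epsilon>\<close>. For \<open>\<epsilon> \<le> 1\<close> the lower constant is at least \<open>\<epsilon> / C\<close> and the upper
  one at most \<open>C\<close>, with \<open>C\<close> independent of \<open>\<epsilon>\<close>.\<close>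

lemma in_L2_continuous_on:
  assumes "continuous_on {0..L} f"
  shows "in_L2 L f"
proof -
  have "f \<in> borel_measurable (lebesgue_on {0..L})"
    using assms by (rule continuous_imp_measurable_on_sets_lebesgue) simp
  then have "f measurable_on {0..L}"
    by (simp add: measurable_on_iff_borel_measurable)
  moreover have "(\<lambda>x. (f x)\<^sup>2) integrable_on {0..L}"
    using assms by (intro integrable_continuous_interval continuous_intros)
  ultimately show ?thesis
    unfolding in_L2_def ..
qed

lemma L2norm2_nonneg: "in_L2 L f \<Longrightarrow> 0 \<le> L2norm2 L f"
  unfolding in_L2_def L2norm2_def by (auto intro: integral_nonneg)

lemma in_L2_integrable_mult:
  assumes f: "in_L2 L f" and g: "in_L2 L g"
  shows "(\<lambda>x. f x * g x) integrable_on {0..L}"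
proof (rule measurable_bounded_by_integrable_imp_integrable_real)
  have "f \<in> borel_measurable (lebesgue_on {0..L})" "g \<in> borel_measurable (lebesgue_on {0..L})"
    using f g by (simp_all add: in_L2_def measurable_on_iff_borel_measurable)
  then show "(\<lambda>x. f x * g x) \<in> borel_measurable (lebesgue_on {0..L})"
    by measurable
  show "(\<lambda>x. ((f x)\<^sup>2 + (g x)\<^sup>2) / 2) integrable_on {0..L}"
    using f g unfolding in_L2_def by (intro integrable_on_divide integrable_add) auto
  show "\<bar>f x * g x\<bar> \<le> ((f x)\<^sup>2 + (g x)\<^sup>2) / 2" for x
    using sum_squares_bound[of "\<bar>f x\<bar>" "\<bar>g x\<bar>"] by (simp add: abs_mult)
qed simp

lemma quadratic_nonneg_imp_square_le:
  fixes a b c :: real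
  assumes "0 \<le> a" and nonneg: "\<And>t. 0 \<le> a * t\<^sup>2 - 2 * b * t + c"
  shows "b\<^sup>2 \<le> a * c"
proof (cases "a = 0")
  case True
  have "b = 0"
  proof (rule ccontr)
    assume "b \<noteq> 0"
    then show False
      using nonneg[of "(c + 1) / (2 * b)"] True by simp
  qed
  then show ?thesis
    using True by simp
next
  case False
  then have "0 < a"
    using assms(1) by simp
  have "0 \<le> a * (a * (b / a)\<^sup>2 - 2 * b * (b / a) + c)"
    using nonneg[of "b / a"] \<open>0 < a\<close> by simp
  also have "\<dots> = a * c - b\<^sup>2"
    using \<open>0 < a\<close> by (simp add: power2_eq_square field_simps)
  finally show ?thesis
    by simp
qed

lemma L2_Cauchy_Schwarz:
  assumes f: "in_L2 L f" and g: "in_L2 L g"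
  shows "(integral {0..L} (\<lambda>x. f x * g x))\<^sup>2 \<le> L2norm2 L f * L2norm2 L g"
proof (rule quadratic_nonneg_imp_square_le)
  show "0 \<le> L2norm2 L f"
    using f by (rule L2norm2_nonneg)
  fix t :: real
  let ?I = "integral {0..L} (\<lambda>x. f x * g x)"
  have "((\<lambda>x. (f x)\<^sup>2) has_integral L2norm2 L f) {0..L}"
    and "((\<lambda>x. (g x)\<^sup>2) has_integral L2norm2 L g) {0..L}"
    and "((\<lambda>x. f x * g x) has_integral ?I) {0..L}"
    using f g in_L2_integrable_mult[OF f g] unfolding in_L2_def L2norm2_def by auto
  then have "((\<lambda>x. t\<^sup>2 * (f x)\<^sup>2 - 2 * t * (f x * g x) + (g x)\<^sup>2) has_integral
      t\<^sup>2 * L2norm2 L f - 2 * t * ?I + L2norm2 L g) {0..L}"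
    by (intro has_integral_add has_integral_diff has_integral_mult_right)
  moreover have "t\<^sup>2 * (f x)\<^sup>2 - 2 * t * (f x * g x) + (g x)\<^sup>2 = (t * f x - g x)\<^sup>2" for x
    by (simp add: power2_eq_square algebra_simps)
  ultimately have "0 \<le> t\<^sup>2 * L2norm2 L f - 2 * t * ?I + L2norm2 L g"
    by (auto intro: has_integral_nonneg)
  then show "0 \<le> L2norm2 L f * t\<^sup>2 - 2 * ?I * t + L2norm2 L g"
    by (simp add: algebra_simps)
qed

text \<open>No hypothesis on \<open>L\<close> is needed: if \<open>sin (L / 2) = 0\<close>, then \<open>M = 0\<close> because \<open>x / 0 = 0\<close>.\<close>

lemma continuous_on_Mfun: "continuous_on A (Mfun c L)"
proof -
  have "Mfun c L = (\<lambda>x. 2 * c * (sin (x / 2) * sin ((L - x) / 2)) * (1 / sin (L / 2)))"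
    by (simp add: fun_eq_iff Mfun_def)
  show ?thesis
    unfolding \<open>Mfun c L = _\<close> by (intro continuous_on_mult_right continuous_intros) auto
qed

lemma in_L2_Mfun: "in_L2 L (Mfun c L)"
  by (rule in_L2_continuous_on[OF continuous_on_Mfun])

lemma scaled_square_le_add_diff_square:
  fixes A B Y a z :: real
  assumes "0 \<le> A" "0 < B" "0 \<le> Y" "a\<^sup>2 \<le> A * Y"
  shows "B * z\<^sup>2 / (A + B) \<le> B * Y + (a - z)\<^sup>2"
proof (cases "A = 0")
  case True
  then show ?thesis
    using assms by simp
next
  case False
  then have "0 < A"
    using assms(1) by simp
  have "A * ((A + B) * (B * Y + (a - z)\<^sup>2) - B * z\<^sup>2)
      = (A * z - (A + B) * a)\<^sup>2 + (A + B) * B * (A * Y - a\<^sup>2)"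
    by (simp add: power2_eq_square algebra_simps)
  also have "\<dots> \<ge> 0"
    using assms by simp
  finally have "B * z\<^sup>2 \<le> (A + B) * (B * Y + (a - z)\<^sup>2)"
    using \<open>0 < A\<close> by (simp add: zero_le_mult_iff)
  then show ?thesis
    using \<open>0 < A\<close> assms(2) by (simp add: divide_le_eq algebra_simps)
qed

lemma coupling_term_square_le:
  assumes "in_L2 L y"
  shows "(e * integral {0..L} (\<lambda>x. Mfun c L x * y x))\<^sup>2
           \<le> e\<^sup>2 * L2norm2 L (Mfun c L) * L2norm2 L y"
  using L2_Cauchy_Schwarz[OF in_L2_Mfun assms, of c]
  by (simp add: power_mult_distrib mult.assoc mult_left_mono)

lemma V1_lower_bound:
  assumes y: "in_L2 L y" and "0 < e" "0 < cl" and W_lower: "cl * L2norm2 L y \<le> W y"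
  shows "min (cl * e / 2) ((1/2) * (cl * e / (e\<^sup>2 * L2norm2 L (Mfun c L) + cl * e)))
           * (L2norm2 L y + \<bar>z\<bar>\<^sup>2) \<le> V1 W c L e y z"
proof -
  define m where "m = L2norm2 L (Mfun c L)"
  define Y where "Y = L2norm2 L y"
  define I where "I = integral {0..L} (\<lambda>x. Mfun c L x * y x)"
  define \<nu> where "\<nu> = (1/2) * (cl * e / (e\<^sup>2 * m + cl * e))"
  define q where "q = cl * e * z\<^sup>2 / (e\<^sup>2 * m + cl * e)"
  have "0 \<le> m" "0 \<le> Y"
    unfolding m_def Y_def using y in_L2_Mfun by (simp_all add: L2norm2_nonneg)
  have "(e * I)\<^sup>2 \<le> e\<^sup>2 * m * Y"
    unfolding I_def m_def Y_def using y by (rule coupling_term_square_le)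
  then have coupling: "q \<le> cl * e * Y + (e * I - z)\<^sup>2"
    unfolding q_def using \<open>0 \<le> m\<close> \<open>0 \<le> Y\<close> assms(2,3)
    by (intro scaled_square_le_add_diff_square) auto
  have "min (cl * e / 2) \<nu> * Y \<le> cl * e / 2 * Y" "min (cl * e / 2) \<nu> * z\<^sup>2 \<le> \<nu> * z\<^sup>2"
    using \<open>0 \<le> Y\<close> by (intro mult_right_mono; simp)+
  then have "min (cl * e / 2) \<nu> * (Y + \<bar>z\<bar>\<^sup>2) \<le> cl * e / 2 * Y + \<nu> * z\<^sup>2"
    by (simp add: distrib_left)
  also have "\<dots> = cl * e * Y / 2 + q / 2"
    unfolding \<nu>_def q_def by simp
  also have "\<dots> \<le> e * W y + (e * I - z)\<^sup>2 / 2"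
  proof -
    have "cl * e * Y \<le> e * W y"
      using W_lower \<open>0 < e\<close> unfolding Y_def by (simp add: mult.commute mult.left_commute)
    with coupling show ?thesis
      by linarith
  qed
  finally show ?thesis
    unfolding V1_def \<nu>_def m_def Y_def I_def by simp
qed

lemma V1_upper_bound:
  assumes y: "in_L2 L y" and "0 \<le> e" and W_upper: "W y \<le> cu * L2norm2 L y"
  shows "V1 W c L e y z \<le>
           max (e * cu + e\<^sup>2 * L2norm2 L (Mfun c L)) 1 * (L2norm2 L y + \<bar>z\<bar>\<^sup>2)"
proof -
  define m where "m = L2norm2 L (Mfun c L)"
  define Y where "Y = L2norm2 L y"
  define I where "I = integral {0..L} (\<lambda>x. Mfun c L x * y x)"
  have "0 \<le> Y"
    unfolding Y_def using y by (rule L2norm2_nonneg)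
  have "(e * I)\<^sup>2 \<le> e\<^sup>2 * m * Y"
    unfolding I_def m_def Y_def using y by (rule coupling_term_square_le)
  moreover have "(e * I - z)\<^sup>2 \<le> 2 * (e * I)\<^sup>2 + 2 * z\<^sup>2"
    using sum_squares_bound[of "e * I" "- z"] by (simp add: power2_diff)
  moreover have "e * W y \<le> e * cu * Y"
    using W_upper \<open>0 \<le> e\<close> unfolding Y_def by (metis mult.assoc mult_left_mono)
  ultimately have "e * W y + (1/2) * (e * I - z)\<^sup>2 \<le> (e * cu + e\<^sup>2 * m) * Y + z\<^sup>2"
    by (simp add: algebra_simps)
  also have "\<dots> \<le> max (e * cu + e\<^sup>2 * m) 1 * Y + max (e * cu + e\<^sup>2 * m) 1 * \<bar>z\<bar>\<^sup>2"
    using \<open>0 \<le> Y\<close> mult_right_mono[of 1 "max (e * cu + e\<^sup>2 * m) 1" "\<bar>z\<bar>\<^sup>2"]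
    by (intro add_mono mult_right_mono) auto
  finally show ?thesis
    unfolding V1_def m_def Y_def I_def by (simp add: distrib_left)
qed

lemma V1_lower_coefficient_ge_linear:
  fixes e cl m C :: real
  assumes "0 < e" "e \<le> 1" "0 < cl" "0 \<le> m" "2 / cl \<le> C" "2 * (m + cl) / cl \<le> C"
  shows "e / C \<le> min (cl * e / 2) ((1/2) * (cl * e / (e\<^sup>2 * m + cl * e)))"
proof -
  have "0 < 2 / cl"
    using assms(3) by simp
  with assms(5) have "0 < C"
    by linarith
  have "e / C \<le> e / (2 / cl)"
    using assms \<open>0 < C\<close> by (intro divide_left_mono) auto
  then have "e / C \<le> cl * e / 2"
    by (simp add: mult.commute)
  have "e / C \<le> 1 / C"
    using assms(2) \<open>0 < C\<close> by (simp add: divide_right_mono)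
  also have "\<dots> \<le> cl / (2 * (m + cl))"
    using assms(3,4,6) \<open>0 < C\<close> by (simp add: field_simps)
  also have "\<dots> \<le> cl / (2 * (e * m + cl))"
  proof -
    have "e * m \<le> m"
      using assms(1,2,4) by (simp add: mult_left_le_one_le)
    then show ?thesis
      using assms by (intro divide_left_mono) (auto intro!: mult_pos_pos add_nonneg_pos)
  qed
  also have "\<dots> = (1/2) * (cl * e / (e\<^sup>2 * m + cl * e))"
  proof -
    have "e\<^sup>2 * m + cl * e = e * (e * m + cl)"
      by (simp add: power2_eq_square algebra_simps)
    then show ?thesis
      using assms(1) by simp
  qed
  finally show ?thesis
    using \<open>e / C \<le> cl * e / 2\<close> by simp
qed

lemma V1_uniform_bounds:
  fixes c :: real
  assumes y: "in_L2 L y" and "0 < e" "e \<le> 1" "0 < cl" "0 \<le> cu"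
    and W_lower: "cl * L2norm2 L y \<le> W y" and W_upper: "W y \<le> cu * L2norm2 L y"
  defines "C \<equiv> cu + L2norm2 L (Mfun c L) + 2 * (1 + L2norm2 L (Mfun c L) + cl) / cl"
  shows "e / C * (L2norm2 L y + \<bar>z\<bar>\<^sup>2) \<le> V1 W c L e y z"
    and "V1 W c L e y z \<le> C * (L2norm2 L y + \<bar>z\<bar>\<^sup>2)"
proof -
  define m where "m = L2norm2 L (Mfun c L)"
  have "0 \<le> m" "0 \<le> L2norm2 L y + \<bar>z\<bar>\<^sup>2"
    unfolding m_def using in_L2_Mfun y by (simp_all add: L2norm2_nonneg)
  have "2 / cl \<le> 2 * (1 + m + cl) / cl" "2 * (m + cl) / cl \<le> 2 * (1 + m + cl) / cl"
    using \<open>0 \<le> m\<close> \<open>0 < cl\<close> by (simp_all add: divide_right_mono)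
  moreover have "2 \<le> 2 * (1 + m + cl) / cl"
    using \<open>0 \<le> m\<close> \<open>0 < cl\<close> by (simp add: le_divide_eq)
  ultimately have "2 / cl \<le> C" "2 * (m + cl) / cl \<le> C" "1 \<le> C"
    unfolding C_def m_def[symmetric] using \<open>0 \<le> m\<close> \<open>0 \<le> cu\<close> by linarith+
  have "e / C \<le> min (cl * e / 2) ((1/2) * (cl * e / (e\<^sup>2 * m + cl * e)))"
    using V1_lower_coefficient_ge_linear \<open>2 / cl \<le> C\<close> \<open>2 * (m + cl) / cl \<le> C\<close> \<open>0 \<le> m\<close> assms(2-4) by blast
  then show "e / C * (L2norm2 L y + \<bar>z\<bar>\<^sup>2) \<le> V1 W c L e y z"
    using V1_lower_bound[where W = W, OF y \<open>0 < e\<close> \<open>0 < cl\<close> W_lower] \<open>0 \<le> L2norm2 L y + \<bar>z\<bar>\<^sup>2\<close>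
    unfolding m_def by (meson mult_right_mono order_trans)
  have "e * cu \<le> cu" "e\<^sup>2 * m \<le> m"
    using assms(2,3,5) \<open>0 \<le> m\<close> by (simp_all add: mult_left_le_one_le power_le_one)
  with \<open>1 \<le> C\<close> have "max (e * cu + e\<^sup>2 * m) 1 \<le> C"
    unfolding C_def m_def[symmetric] using \<open>0 \<le> m\<close> \<open>0 < cl\<close> by (simp add: add_increasing2)
  then show "V1 W c L e y z \<le> C * (L2norm2 L y + \<bar>z\<bar>\<^sup>2)"
    using V1_upper_bound[where W = W, OF y _ W_upper] \<open>0 < e\<close> \<open>0 \<le> L2norm2 L y + \<bar>z\<bar>\<^sup>2\<close>
    unfolding m_def by (meson less_imp_le mult_right_mono order_trans)
qed

theorem lemma2p2:
  fixes L c eps cl cu :: real and W :: "(real \<Rightarrow> real) \<Rightarrow> real"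
  assumes "L > 0" and "L \<notin> critical_lengths" and "eps > 0"
    and "cl > 0" and "cu > 0"
    and W_bounds: "\<And>y. in_L2 L y \<Longrightarrow> cl * L2norm2 L y \<le> W y \<and> W y \<le> cu * L2norm2 L y"
  shows "(\<forall>y z. in_L2 L y \<longrightarrow>
            min (cl * eps / 2) ((1/2) * (cl * eps / (eps^2 * L2norm2 L (Mfun c L) + cl * eps)))
              * (L2norm2 L y + \<bar>z\<bar>^2) \<le> V1 W c L eps y z
          \<and> V1 W c L eps y z \<le>
              max (eps * cu + eps^2 * L2norm2 L (Mfun c L)) 1 * (L2norm2 L y + \<bar>z\<bar>^2))
       \<and> (\<exists>C > 0. \<forall>e y z. 0 < e \<and> e \<le> 1 \<and> in_L2 L y \<longrightarrow>
            e / C * (L2norm2 L y + \<bar>z\<bar>^2) \<le> V1 W c L e y z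
          \<and> V1 W c L e y z \<le> C * (L2norm2 L y + \<bar>z\<bar>^2))"
proof -
  let ?C = "cu + L2norm2 L (Mfun c L) + 2 * (1 + L2norm2 L (Mfun c L) + cl) / cl"
  have "0 < ?C"
    using assms(4,5) L2norm2_nonneg[OF in_L2_Mfun, of L c] by (simp add: add_pos_nonneg)
  then show ?thesis
    using assms(3-5) less_imp_le[OF assms(3)] less_imp_le[OF assms(5)] W_bounds
    by (intro conjI allI impI exI[of _ ?C])
      (blast intro: V1_lower_bound[where W = W] V1_upper_bound[where W = W]
        V1_uniform_bounds[where W = W])+
qed

end
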